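(* Let two balanced mass action chemical reaction networks (networks 1 and 2) share all their boundary chemical species $x_b\in\mathbb{R}^b_+$: network 1 has species vector $(\hat x_1,x_b)$, complex stoichiometric matrix $Z_1=\begin{bmatrix}\hat Z_1\\ Z_{b1}\end{bmatrix}$, incidence matrix $B_1$ and vector of equilibrium constants $K_1^{eq}$; network 2 has species vector $(x_b,\hat x_2)$, complex stoichiometric matrix $Z_2=\begin{bmatrix}Z_{b2}\\ \hat Z_2\end{bmatrix}$, incidence matrix $B_2$ and vector of equilibrium constants $K_2^{eq}$. Then the interconnected network is again balanced if and only if there exist $\hat x_1^{**},\hat x_2^{**},x_b^{**}$ with positive entries such that $$\mathrm{Ln}\begin{bmatrix}K_1^{eq}\\ K_2^{eq}\end{bmatrix}=\begin{bmatrix}B_1^T\hat Z_1^T & 0 & B_1^TZ_{b1}^T\\ 0 & B_2^T\hat Z_2^T & B_2^TZ_{b2}^T\end{bmatrix}\mathrm{Ln}\begin{bmatrix}\hat x_1^{**}\\ \hat x_2^{**}\\ x_b^{**}\end{bmatrix}.$$ Such a thermodynamic equilibrium of the interconnected network exists if there is a partition $\{1,\dots,b\}=I_1\cup I_2$ such that all columns of $B_1^TZ_{b1}^T$ with index in $I_1$ lie in $\operatorname{im} B_1^T\hat Z_1^T$, and all columns of $B_2^TZ_{b2}^T$ with index in $I_2$ lie in $\operatorname{im} B_2^T\hat Z_2^T$.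
   Context: A mass action network has species concentrations $x\in\mathbb{R}^m_+$, complexes (distinct left/right-hand sides of reactions) and reactions; its complex stoichiometric matrix $Z$ has as $\rho$-th column the species composition of complex $\rho$; its complex graph has an edge for each reaction $j$ from the substrate complex $\mathcal{S}_j$ to the product complex $\mathcal{P}_j$, with incidence matrix $B$ ($-1$ at tail, $+1$ at head). Rates $v_j(x)=k_j^{\mathrm{forw}}\exp(Z_{\mathcal{S}_j}^T\mathrm{Ln}(x))-k_j^{\mathrm{rev}}\exp(Z_{\mathcal{P}_j}^T\mathrm{Ln}(x))$, dynamics $\dot x=ZBv(x)$. A thermodynamic equilibrium is $x^*\in\mathbb{R}^m_+$ with $v(x^* )=0$; the network is balanced if one exists (then all $k_j^{\mathrm{forw}},k_j^{\mathrm{rev}}>0$). The vector of equilibrium constants $K^{eq}$ has entries $k_j^{\mathrm{forw}}/k_j^{\mathrm{rev}}$. $\mathrm{Ln}$ is the componentwise logarithm. The interconnected network has species vector $(\hat x_1,x_b,\hat x_2)$ (the shared species $x_b$ identified), reaction set the union of the reactions of both networks with the same rate constants, complex-graph incidence matrix $B=\begin{bmatrix}B_1&0\\0&B_2\end{bmatrix}$, and complex stoichiometric matrix $Z=\begin{bmatrix}\hat Z_1&0\\ Z_{b1}&Z_{b2}\\ 0&\hat Z_2\end{bmatrix}$; its equilibrium constant vector is $(K_1^{eq},K_2^{eq})$. *)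

theory Defs
  imports Complex_Main
begin

text \<open>A mass action network is given by: a finite set of species S (indices of the
 concentration vector), a finite set of complexes C, a finite set of reactions R,
 the complex stoichiometric matrix Z (entry Z s c = coefficient of species s in
 complex c), substrate and product complexes src j, tgt j of each reaction j,
 and forward / reverse rate constants kf, kr.\<close>

definition network_wf ::
  "'s set \<Rightarrow> 'c set \<Rightarrow> 'r set \<Rightarrow> ('s \<Rightarrow> 'c \<Rightarrow> real) \<Rightarrow> ('r \<Rightarrow> 'c) \<Rightarrow> ('r \<Rightarrow> 'c) \<Rightarrow> bool" where
  "network_wf S C R Z src tgt \<longleftrightarrow> finite S \<and> finite C \<and> finite R \<and>
     (\<forall>j\<in>R. src j \<in> C \<and> tgt j \<in> C \<and> src j \<noteq> tgt j) \<and>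
     (\<forall>s\<in>S. \<forall>c\<in>C. Z s c \<ge> 0)"

definition incid :: "('r \<Rightarrow> 'c) \<Rightarrow> ('r \<Rightarrow> 'c) \<Rightarrow> 'c \<Rightarrow> 'r \<Rightarrow> real" where
  "incid src tgt c j = (if c = tgt j then 1 else 0) - (if c = src j then 1 else 0)"

definition rate ::
  "'s set \<Rightarrow> ('s \<Rightarrow> 'c \<Rightarrow> real) \<Rightarrow> ('r \<Rightarrow> 'c) \<Rightarrow> ('r \<Rightarrow> 'c) \<Rightarrow> ('r \<Rightarrow> real) \<Rightarrow> ('r \<Rightarrow> real)
    \<Rightarrow> ('s \<Rightarrow> real) \<Rightarrow> 'r \<Rightarrow> real" where
  "rate S Z src tgt kf kr x j =
     kf j * exp (\<Sum>s\<in>S. Z s (src j) * ln (x s)) - kr j * exp (\<Sum>s\<in>S. Z s (tgt j) * ln (x s))"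

definition thermo_eq ::
  "'s set \<Rightarrow> 'r set \<Rightarrow> ('s \<Rightarrow> 'c \<Rightarrow> real) \<Rightarrow> ('r \<Rightarrow> 'c) \<Rightarrow> ('r \<Rightarrow> 'c) \<Rightarrow> ('r \<Rightarrow> real) \<Rightarrow> ('r \<Rightarrow> real)
    \<Rightarrow> ('s \<Rightarrow> real) \<Rightarrow> bool" where
  "thermo_eq S R Z src tgt kf kr x \<longleftrightarrow> (\<forall>s\<in>S. x s > 0) \<and> (\<forall>j\<in>R. rate S Z src tgt kf kr x j = 0)"

definition balanced ::
  "'s set \<Rightarrow> 'r set \<Rightarrow> ('s \<Rightarrow> 'c \<Rightarrow> real) \<Rightarrow> ('r \<Rightarrow> 'c) \<Rightarrow> ('r \<Rightarrow> 'c) \<Rightarrow> ('r \<Rightarrow> real) \<Rightarrow> ('r \<Rightarrow> real) \<Rightarrow> bool" where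
  "balanced S R Z src tgt kf kr \<longleftrightarrow> (\<forall>j\<in>R. kf j > 0 \<and> kr j > 0) \<and> (\<exists>x. thermo_eq S R Z src tgt kf kr x)"

definition Keq :: "('r \<Rightarrow> real) \<Rightarrow> ('r \<Rightarrow> real) \<Rightarrow> 'r \<Rightarrow> real" where
  "Keq kf kr j = kf j / kr j"

text \<open>(B^T Z_T^T y)_j where Z_T is the submatrix of Z with rows in the species set T.\<close>
definition BtZt ::
  "'c set \<Rightarrow> ('r \<Rightarrow> 'c) \<Rightarrow> ('r \<Rightarrow> 'c) \<Rightarrow> 's set \<Rightarrow> ('s \<Rightarrow> 'c \<Rightarrow> real) \<Rightarrow> ('s \<Rightarrow> real) \<Rightarrow> 'r \<Rightarrow> real" where
  "BtZt C src tgt T Z y j = (\<Sum>c\<in>C. incid src tgt c j * (\<Sum>s\<in>T. Z s c * y s))"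

text \<open>Column with index i (a species) of B^T Z^T, as a vector indexed by reactions.\<close>
definition BtZt_col :: "'c set \<Rightarrow> ('r \<Rightarrow> 'c) \<Rightarrow> ('r \<Rightarrow> 'c) \<Rightarrow> ('s \<Rightarrow> 'c \<Rightarrow> real) \<Rightarrow> 's \<Rightarrow> 'r \<Rightarrow> real" where
  "BtZt_col C src tgt Z i j = (\<Sum>c\<in>C. incid src tgt c j * Z i c)"

text \<open>Species of network 1 are H1 \<union> Bd, of network 2 are
 Bd \<union> H2 (shared boundary species Bd identified); complexes and reactions are the
 disjoint unions (tagged by Inl / Inr).\<close>
definition icZ :: "'s set \<Rightarrow> 's set \<Rightarrow> 's set \<Rightarrow> ('s \<Rightarrow> 'c1 \<Rightarrow> real) \<Rightarrow> ('s \<Rightarrow> 'c2 \<Rightarrow> real)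
    \<Rightarrow> 's \<Rightarrow> 'c1 + 'c2 \<Rightarrow> real" where
  "icZ H1 Bd H2 Z1 Z2 s c = (case c of
      Inl c1 \<Rightarrow> (if s \<in> H1 \<union> Bd then Z1 s c1 else 0)
    | Inr c2 \<Rightarrow> (if s \<in> Bd \<union> H2 then Z2 s c2 else 0))"

definition icMap :: "('r1 \<Rightarrow> 'c1) \<Rightarrow> ('r2 \<Rightarrow> 'c2) \<Rightarrow> 'r1 + 'r2 \<Rightarrow> 'c1 + 'c2" where
  "icMap f1 f2 j = (case j of Inl j1 \<Rightarrow> Inl (f1 j1) | Inr j2 \<Rightarrow> Inr (f2 j2))"

definition ic_balanced ::
  "'s set \<Rightarrow> 's set \<Rightarrow> 's set
   \<Rightarrow> 'r1 set \<Rightarrow> ('s \<Rightarrow> 'c1 \<Rightarrow> real) \<Rightarrow> ('r1 \<Rightarrow> 'c1) \<Rightarrow> ('r1 \<Rightarrow> 'c1) \<Rightarrow> ('r1 \<Rightarrow> real) \<Rightarrow> ('r1 \<Rightarrow> real)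
   \<Rightarrow> 'r2 set \<Rightarrow> ('s \<Rightarrow> 'c2 \<Rightarrow> real) \<Rightarrow> ('r2 \<Rightarrow> 'c2) \<Rightarrow> ('r2 \<Rightarrow> 'c2) \<Rightarrow> ('r2 \<Rightarrow> real) \<Rightarrow> ('r2 \<Rightarrow> real)
   \<Rightarrow> bool" where
  "ic_balanced H1 Bd H2 R1 Z1 src1 tgt1 kf1 kr1 R2 Z2 src2 tgt2 kf2 kr2 \<longleftrightarrow>
     balanced (H1 \<union> Bd \<union> H2) (Inl ` R1 \<union> Inr ` R2) (icZ H1 Bd H2 Z1 Z2)
       (icMap src1 src2) (icMap tgt1 tgt2) (case_sum kf1 kf2) (case_sum kr1 kr2)"

end

theory Submission
  imports Defs
begin

text \<open>Since all rate constants are positive, reaction j vanishes at x iff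
  ln K_j = (B^T Z^T Ln x)_j. The reactions of the interconnection are exactly those of the two
  networks, so it is balanced iff one concentration vector solves both logarithmic systems,
  which after splitting the species into internal and boundary ones is the displayed equation.
  For the sufficient condition start from equilibria x1, x2 of the two networks and use x2 on
  the boundary species in I1 and x1 on those in I2. In network 1 the resulting change of Ln x_b
  is supported on I1, so its image under B1^T Zb1^T lies in im B1^T Z1^T and is absorbed by a
  compensating change of Ln x1; symmetrically for network 2.\<close>

lemma BtZt_eq_sum_col:
  "BtZt C src tgt T Z y j = (\<Sum>s\<in>T. y s * BtZt_col C src tgt Z s j)"
proof -
  have "BtZt C src tgt T Z y j = (\<Sum>c\<in>C. \<Sum>s\<in>T. incid src tgt c j * (Z s c * y s))"
    unfolding BtZt_def by (simp add: sum_distrib_left)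
  also have "\<dots> = (\<Sum>s\<in>T. \<Sum>c\<in>C. incid src tgt c j * (Z s c * y s))"
    by (rule sum.swap)
  also have "\<dots> = (\<Sum>s\<in>T. y s * BtZt_col C src tgt Z s j)"
    unfolding BtZt_col_def by (simp add: sum_distrib_left mult_ac)
  finally show ?thesis .
qed

lemma BtZt_cong:
  "(\<And>s. s \<in> T \<Longrightarrow> y s = y' s) \<Longrightarrow> BtZt C src tgt T Z y j = BtZt C src tgt T Z y' j"
  unfolding BtZt_eq_sum_col by (rule sum.cong) auto

lemma BtZt_add:
  "BtZt C src tgt T Z (\<lambda>s. a s + b s) j = BtZt C src tgt T Z a j + BtZt C src tgt T Z b j"
  unfolding BtZt_eq_sum_col by (simp add: distrib_right sum.distrib)

lemma BtZt_diff:
  "BtZt C src tgt T Z (\<lambda>s. a s - b s) j = BtZt C src tgt T Z a j - BtZt C src tgt T Z b j"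
  unfolding BtZt_eq_sum_col by (simp add: left_diff_distrib sum_subtractf)

lemma BtZt_sum:
  "BtZt C src tgt T Z (\<lambda>s. \<Sum>i\<in>I. d i * y i s) j = (\<Sum>i\<in>I. d i * BtZt C src tgt T Z (y i) j)"
proof -
  have "(\<Sum>s\<in>T. (\<Sum>i\<in>I. d i * y i s) * BtZt_col C src tgt Z s j)
      = (\<Sum>s\<in>T. \<Sum>i\<in>I. d i * (y i s * BtZt_col C src tgt Z s j))"
    by (simp add: sum_distrib_right mult.assoc)
  also have "\<dots> = (\<Sum>i\<in>I. \<Sum>s\<in>T. d i * (y i s * BtZt_col C src tgt Z s j))"
    by (rule sum.swap)
  finally show ?thesis
    unfolding BtZt_eq_sum_col by (simp add: sum_distrib_left)
qed

lemma BtZt_indicator: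
  assumes "finite T" "I \<subseteq> T"
  shows "BtZt C src tgt T Z (\<lambda>s. if s \<in> I then d s else 0) j
    = (\<Sum>i\<in>I. d i * BtZt_col C src tgt Z i j)"
proof -
  have "BtZt C src tgt T Z (\<lambda>s. if s \<in> I then d s else 0) j
      = (\<Sum>s\<in>T. if s \<in> I then d s * BtZt_col C src tgt Z s j else 0)"
    unfolding BtZt_eq_sum_col by (rule sum.cong) auto
  also have "\<dots> = (\<Sum>s\<in>T \<inter> I. d s * BtZt_col C src tgt Z s j)"
    using assms(1) by (simp add: sum.inter_restrict)
  also have "T \<inter> I = I"
    using assms(2) by auto
  finally show ?thesis .
qed

lemma sum_incid_mult:
  assumes "finite C" "src j \<in> C" "tgt j \<in> C"
  shows "(\<Sum>c\<in>C. incid src tgt c j * f c) = f (tgt j) - f (src j)"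
proof -
  have "(\<Sum>c\<in>C. incid src tgt c j * f c)
      = (\<Sum>c\<in>C. (if c = tgt j then f c else 0) - (if c = src j then f c else 0))"
    by (rule sum.cong) (auto simp: incid_def)
  also have "\<dots> = f (tgt j) - f (src j)"
    using assms by (simp add: sum_subtractf)
  finally show ?thesis .
qed

lemma BtZt_reaction:
  assumes "network_wf S C R Z src tgt" "j \<in> R"
  shows "BtZt C src tgt T Z y j = (\<Sum>s\<in>T. Z s (tgt j) * y s) - (\<Sum>s\<in>T. Z s (src j) * y s)"
  using assms unfolding BtZt_def network_wf_def by (subst sum_incid_mult) auto

lemma rate_eq_0_iff_ln_Keq:
  assumes "kf j > 0" "kr j > 0"
  shows "rate S Z src tgt kf kr x j = 0 \<longleftrightarrow>
    ln (Keq kf kr j) = (\<Sum>s\<in>S. Z s (tgt j) * ln (x s)) - (\<Sum>s\<in>S. Z s (src j) * ln (x s))"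
proof -
  define a where "a = (\<Sum>s\<in>S. Z s (src j) * ln (x s))"
  define b where "b = (\<Sum>s\<in>S. Z s (tgt j) * ln (x s))"
  have "rate S Z src tgt kf kr x j = 0 \<longleftrightarrow> kf j * exp a = kr j * exp b"
    unfolding rate_def a_def b_def by simp
  also have "\<dots> \<longleftrightarrow> ln (kf j) + a = ln (kr j) + b"
    using assms by (simp add: ln_inj_iff[symmetric] ln_mult)
  also have "\<dots> \<longleftrightarrow> ln (Keq kf kr j) = b - a"
    using assms unfolding Keq_def by (simp add: ln_div) linarith
  finally show ?thesis
    unfolding a_def b_def .
qed

definition Keq_log_eq ::
  "'c set \<Rightarrow> ('r \<Rightarrow> 'c) \<Rightarrow> ('r \<Rightarrow> 'c) \<Rightarrow> 'r set \<Rightarrow> ('s \<Rightarrow> 'c \<Rightarrow> real) \<Rightarrow> ('r \<Rightarrow> real) \<Rightarrow> ('r \<Rightarrow> real)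
    \<Rightarrow> 's set \<Rightarrow> 's set \<Rightarrow> ('s \<Rightarrow> real) \<Rightarrow> ('s \<Rightarrow> real) \<Rightarrow> bool" where
  "Keq_log_eq C src tgt R Z kf kr A D u v \<longleftrightarrow>
     (\<forall>j\<in>R. ln (Keq kf kr j) = BtZt C src tgt A Z u j + BtZt C src tgt D Z v j)"

lemma Keq_log_eq_cong:
  assumes "\<And>s. s \<in> A \<Longrightarrow> u s = u' s" "\<And>s. s \<in> D \<Longrightarrow> v s = v' s"
  shows "Keq_log_eq C src tgt R Z kf kr A D u v \<longleftrightarrow> Keq_log_eq C src tgt R Z kf kr A D u' v'"
proof -
  have "BtZt C src tgt A Z u j = BtZt C src tgt A Z u' j" "BtZt C src tgt D Z v j = BtZt C src tgt D Z v' j"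
    for j
    using assms by (auto intro: BtZt_cong)
  then show ?thesis
    unfolding Keq_log_eq_def by simp
qed

lemma thermo_eq_iff_Keq_log_eq:
  assumes wf: "network_wf S C R Z src tgt" and S: "S = A \<union> D" "A \<inter> D = {}"
    and pos: "\<forall>j\<in>R. kf j > 0 \<and> kr j > 0"
  shows "thermo_eq S R Z src tgt kf kr x \<longleftrightarrow>
    (\<forall>s\<in>S. x s > 0) \<and> Keq_log_eq C src tgt R Z kf kr A D (\<lambda>s. ln (x s)) (\<lambda>s. ln (x s))"
proof -
  have fin: "finite A" "finite D"
    using wf S unfolding network_wf_def by auto
  have "rate S Z src tgt kf kr x j = 0 \<longleftrightarrow>
      ln (Keq kf kr j) = BtZt C src tgt A Z (\<lambda>s. ln (x s)) j + BtZt C src tgt D Z (\<lambda>s. ln (x s)) j"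
    if "j \<in> R" for j
  proof -
    have "rate S Z src tgt kf kr x j = 0 \<longleftrightarrow>
        ln (Keq kf kr j) = (\<Sum>s\<in>S. Z s (tgt j) * ln (x s)) - (\<Sum>s\<in>S. Z s (src j) * ln (x s))"
      using pos that by (intro rate_eq_0_iff_ln_Keq) auto
    then show ?thesis
      unfolding BtZt_reaction[OF wf that] S(1)
      using fin S(2) by (simp add: sum.union_disjoint algebra_simps)
  qed
  then show ?thesis
    unfolding thermo_eq_def Keq_log_eq_def by blast
qed

lemma sum_icZ_Inl:
  assumes "finite (H1 \<union> Bd)" "finite H2" "H2 \<inter> (H1 \<union> Bd) = {}"
  shows "(\<Sum>s\<in>H1 \<union> Bd \<union> H2. icZ H1 Bd H2 Z1 Z2 s (Inl c) * g s) = (\<Sum>s\<in>H1 \<union> Bd. Z1 s c * g s)"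
proof -
  have "(\<Sum>s\<in>H1 \<union> Bd \<union> H2. icZ H1 Bd H2 Z1 Z2 s (Inl c) * g s)
      = (\<Sum>s\<in>H1 \<union> Bd. icZ H1 Bd H2 Z1 Z2 s (Inl c) * g s)"
    using assms by (subst sum.union_disjoint) (auto simp: icZ_def intro!: sum.neutral)
  also have "\<dots> = (\<Sum>s\<in>H1 \<union> Bd. Z1 s c * g s)"
    by (rule sum.cong) (auto simp: icZ_def)
  finally show ?thesis .
qed

lemma sum_icZ_Inr:
  assumes "finite (Bd \<union> H2)" "finite H1" "H1 \<inter> (Bd \<union> H2) = {}"
  shows "(\<Sum>s\<in>H1 \<union> Bd \<union> H2. icZ H1 Bd H2 Z1 Z2 s (Inr c) * g s) = (\<Sum>s\<in>Bd \<union> H2. Z2 s c * g s)"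
proof -
  have "H1 \<union> Bd \<union> H2 = (Bd \<union> H2) \<union> H1"
    by auto
  then have "(\<Sum>s\<in>H1 \<union> Bd \<union> H2. icZ H1 Bd H2 Z1 Z2 s (Inr c) * g s)
      = (\<Sum>s\<in>Bd \<union> H2. icZ H1 Bd H2 Z1 Z2 s (Inr c) * g s)"
    using assms by (simp only:, subst sum.union_disjoint) (auto simp: icZ_def intro!: sum.neutral)
  also have "\<dots> = (\<Sum>s\<in>Bd \<union> H2. Z2 s c * g s)"
    by (rule sum.cong) (auto simp: icZ_def)
  finally show ?thesis .
qed

lemma thermo_eq_icZ_iff:
  assumes fin: "finite (H1 \<union> Bd \<union> H2)" and disj: "H1 \<inter> Bd = {}" "H2 \<inter> Bd = {}" "H1 \<inter> H2 = {}"
  shows "thermo_eq (H1 \<union> Bd \<union> H2) (Inl ` R1 \<union> Inr ` R2) (icZ H1 Bd H2 Z1 Z2)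
      (icMap src1 src2) (icMap tgt1 tgt2) (case_sum kf1 kf2) (case_sum kr1 kr2) x \<longleftrightarrow>
    thermo_eq (H1 \<union> Bd) R1 Z1 src1 tgt1 kf1 kr1 x \<and> thermo_eq (Bd \<union> H2) R2 Z2 src2 tgt2 kf2 kr2 x"
proof -
  let ?rate = "rate (H1 \<union> Bd \<union> H2) (icZ H1 Bd H2 Z1 Z2) (icMap src1 src2) (icMap tgt1 tgt2)
    (case_sum kf1 kf2) (case_sum kr1 kr2) x"
  have fin1: "finite (H1 \<union> Bd)" "finite H2" "H2 \<inter> (H1 \<union> Bd) = {}"
    and fin2: "finite (Bd \<union> H2)" "finite H1" "H1 \<inter> (Bd \<union> H2) = {}"
    using fin disj by auto
  have "?rate (Inl j) = rate (H1 \<union> Bd) Z1 src1 tgt1 kf1 kr1 x j" for j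
    unfolding rate_def icMap_def by (simp add: sum_icZ_Inl[OF fin1])
  moreover have "?rate (Inr j) = rate (Bd \<union> H2) Z2 src2 tgt2 kf2 kr2 x j" for j
    unfolding rate_def icMap_def by (simp add: sum_icZ_Inr[OF fin2])
  ultimately show ?thesis
    unfolding thermo_eq_def by (simp add: ball_Un) blast
qed

lemma ic_balanced_iff_common_thermo_eq:
  assumes "network_wf (H1 \<union> Bd) C1 R1 Z1 src1 tgt1" "network_wf (Bd \<union> H2) C2 R2 Z2 src2 tgt2"
    and "H1 \<inter> Bd = {}" "H2 \<inter> Bd = {}" "H1 \<inter> H2 = {}"
    and "balanced (H1 \<union> Bd) R1 Z1 src1 tgt1 kf1 kr1" "balanced (Bd \<union> H2) R2 Z2 src2 tgt2 kf2 kr2"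
  shows "ic_balanced H1 Bd H2 R1 Z1 src1 tgt1 kf1 kr1 R2 Z2 src2 tgt2 kf2 kr2 \<longleftrightarrow>
    (\<exists>x. thermo_eq (H1 \<union> Bd) R1 Z1 src1 tgt1 kf1 kr1 x \<and> thermo_eq (Bd \<union> H2) R2 Z2 src2 tgt2 kf2 kr2 x)"
proof -
  have "finite (H1 \<union> Bd \<union> H2)"
    using assms(1,2) by (simp add: network_wf_def)
  note thermo_eq_icZ = thermo_eq_icZ_iff[OF this assms(3-5)]
  have "\<forall>j\<in>Inl ` R1 \<union> Inr ` R2. case_sum kf1 kf2 j > 0 \<and> case_sum kr1 kr2 j > 0"
    using assms(6,7) by (auto simp: balanced_def)
  then show ?thesis
    unfolding ic_balanced_def balanced_def thermo_eq_icZ by simp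
qed

definition ic_Keq_log_solvable ::
  "'s set \<Rightarrow> 's set \<Rightarrow> 's set
   \<Rightarrow> 'c1 set \<Rightarrow> 'r1 set \<Rightarrow> ('s \<Rightarrow> 'c1 \<Rightarrow> real) \<Rightarrow> ('r1 \<Rightarrow> 'c1) \<Rightarrow> ('r1 \<Rightarrow> 'c1) \<Rightarrow> ('r1 \<Rightarrow> real) \<Rightarrow> ('r1 \<Rightarrow> real)
   \<Rightarrow> 'c2 set \<Rightarrow> 'r2 set \<Rightarrow> ('s \<Rightarrow> 'c2 \<Rightarrow> real) \<Rightarrow> ('r2 \<Rightarrow> 'c2) \<Rightarrow> ('r2 \<Rightarrow> 'c2) \<Rightarrow> ('r2 \<Rightarrow> real) \<Rightarrow> ('r2 \<Rightarrow> real)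
   \<Rightarrow> bool" where
  "ic_Keq_log_solvable H1 Bd H2 C1 R1 Z1 src1 tgt1 kf1 kr1 C2 R2 Z2 src2 tgt2 kf2 kr2 \<longleftrightarrow>
    (\<exists>xh1 xh2 xb. (\<forall>s\<in>H1. xh1 s > 0) \<and> (\<forall>s\<in>H2. xh2 s > 0) \<and> (\<forall>s\<in>Bd. xb s > 0) \<and>
       Keq_log_eq C1 src1 tgt1 R1 Z1 kf1 kr1 H1 Bd (\<lambda>s. ln (xh1 s)) (\<lambda>s. ln (xb s)) \<and>
       Keq_log_eq C2 src2 tgt2 R2 Z2 kf2 kr2 H2 Bd (\<lambda>s. ln (xh2 s)) (\<lambda>s. ln (xb s)))"

lemma ic_balanced_iff_Keq_log_solvable:
  assumes wf: "network_wf (H1 \<union> Bd) C1 R1 Z1 src1 tgt1" "network_wf (Bd \<union> H2) C2 R2 Z2 src2 tgt2"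
    and disj: "H1 \<inter> Bd = {}" "H2 \<inter> Bd = {}" "H1 \<inter> H2 = {}"
    and bal: "balanced (H1 \<union> Bd) R1 Z1 src1 tgt1 kf1 kr1" "balanced (Bd \<union> H2) R2 Z2 src2 tgt2 kf2 kr2"
  shows "ic_balanced H1 Bd H2 R1 Z1 src1 tgt1 kf1 kr1 R2 Z2 src2 tgt2 kf2 kr2 \<longleftrightarrow>
    ic_Keq_log_solvable H1 Bd H2 C1 R1 Z1 src1 tgt1 kf1 kr1 C2 R2 Z2 src2 tgt2 kf2 kr2"
proof -
  let ?eq1 = "\<lambda>u v. Keq_log_eq C1 src1 tgt1 R1 Z1 kf1 kr1 H1 Bd u v"
  let ?eq2 = "\<lambda>u v. Keq_log_eq C2 src2 tgt2 R2 Z2 kf2 kr2 H2 Bd u v"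
  have thermo1: "thermo_eq (H1 \<union> Bd) R1 Z1 src1 tgt1 kf1 kr1 x \<longleftrightarrow>
      (\<forall>s\<in>H1 \<union> Bd. x s > 0) \<and> ?eq1 (\<lambda>s. ln (x s)) (\<lambda>s. ln (x s))" for x
    using bal(1) by (intro thermo_eq_iff_Keq_log_eq[OF wf(1) refl disj(1)]) (simp add: balanced_def)
  have thermo2: "thermo_eq (Bd \<union> H2) R2 Z2 src2 tgt2 kf2 kr2 x \<longleftrightarrow>
      (\<forall>s\<in>Bd \<union> H2. x s > 0) \<and> ?eq2 (\<lambda>s. ln (x s)) (\<lambda>s. ln (x s))" for x
    using bal(2) by (intro thermo_eq_iff_Keq_log_eq[OF wf(2) Un_commute disj(2)]) (simp add: balanced_def)
  have "(\<exists>x. thermo_eq (H1 \<union> Bd) R1 Z1 src1 tgt1 kf1 kr1 x \<and> thermo_eq (Bd \<union> H2) R2 Z2 src2 tgt2 kf2 kr2 x)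
      \<longleftrightarrow> ic_Keq_log_solvable H1 Bd H2 C1 R1 Z1 src1 tgt1 kf1 kr1 C2 R2 Z2 src2 tgt2 kf2 kr2"
    (is "?common \<longleftrightarrow> ?solvable")
  proof
    assume ?common
    then show ?solvable
      unfolding ic_Keq_log_solvable_def thermo1 thermo2 by blast
  next
    assume ?solvable
    then obtain xh1 xh2 xb where pos: "\<forall>s\<in>H1. xh1 s > 0" "\<forall>s\<in>H2. xh2 s > 0" "\<forall>s\<in>Bd. xb s > 0"
      and eq: "?eq1 (\<lambda>s. ln (xh1 s)) (\<lambda>s. ln (xb s))" "?eq2 (\<lambda>s. ln (xh2 s)) (\<lambda>s. ln (xb s))"
      unfolding ic_Keq_log_solvable_def by blast
    define x where "x s = (if s \<in> H1 then xh1 s else if s \<in> H2 then xh2 s else xb s)" for s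
    have "?eq1 (\<lambda>s. ln (x s)) (\<lambda>s. ln (x s)) \<longleftrightarrow> ?eq1 (\<lambda>s. ln (xh1 s)) (\<lambda>s. ln (xb s))"
      "?eq2 (\<lambda>s. ln (x s)) (\<lambda>s. ln (x s)) \<longleftrightarrow> ?eq2 (\<lambda>s. ln (xh2 s)) (\<lambda>s. ln (xb s))"
      using disj by (auto simp: x_def intro!: Keq_log_eq_cong)
    moreover have "\<forall>s\<in>H1 \<union> Bd \<union> H2. x s > 0"
      using pos by (auto simp: x_def)
    ultimately show ?common
      unfolding thermo1 thermo2 using eq by auto
  qed
  then show ?thesis
    using ic_balanced_iff_common_thermo_eq[OF wf disj bal] by simp
qed

definition col_in_image ::
  "'c set \<Rightarrow> ('r \<Rightarrow> 'c) \<Rightarrow> ('r \<Rightarrow> 'c) \<Rightarrow> 'r set \<Rightarrow> ('s \<Rightarrow> 'c \<Rightarrow> real) \<Rightarrow> 's set \<Rightarrow> 's \<Rightarrow> bool" where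
  "col_in_image C src tgt R Z H i \<longleftrightarrow>
    (\<exists>y. \<forall>j\<in>R. BtZt_col C src tgt Z i j = BtZt C src tgt H Z y j)"

lemma Keq_log_eq_shift_boundary:
  assumes "finite D" "I \<subseteq> D" "Keq_log_eq C src tgt R Z kf kr A D u v"
    and col: "\<forall>i\<in>I. \<forall>j\<in>R. BtZt_col C src tgt Z i j = BtZt C src tgt A Z (y i) j"
  shows "Keq_log_eq C src tgt R Z kf kr A D
    (\<lambda>s. u s - (\<Sum>i\<in>I. d i * y i s)) (\<lambda>s. v s + (if s \<in> I then d s else 0))"
proof -
  have "BtZt C src tgt A Z (\<lambda>s. u s - (\<Sum>i\<in>I. d i * y i s)) j
      + BtZt C src tgt D Z (\<lambda>s. v s + (if s \<in> I then d s else 0)) j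
    = BtZt C src tgt A Z u j + BtZt C src tgt D Z v j" if "j \<in> R" for j
  proof -
    have "(\<Sum>i\<in>I. d i * BtZt C src tgt A Z (y i) j) = (\<Sum>i\<in>I. d i * BtZt_col C src tgt Z i j)"
      using col that by simp
    then show ?thesis
      by (simp add: BtZt_diff BtZt_sum BtZt_add BtZt_indicator[OF assms(1,2)])
  qed
  then show ?thesis
    using assms(3) unfolding Keq_log_eq_def by simp
qed

lemma ic_Keq_log_solvable_if_partition:
  assumes wf: "network_wf (H1 \<union> Bd) C1 R1 Z1 src1 tgt1" "network_wf (Bd \<union> H2) C2 R2 Z2 src2 tgt2"
    and disj: "H1 \<inter> Bd = {}" "H2 \<inter> Bd = {}"
    and bal: "balanced (H1 \<union> Bd) R1 Z1 src1 tgt1 kf1 kr1" "balanced (Bd \<union> H2) R2 Z2 src2 tgt2 kf2 kr2"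
    and part: "I1 \<union> I2 = Bd" "I1 \<inter> I2 = {}"
    and im1: "\<forall>i\<in>I1. col_in_image C1 src1 tgt1 R1 Z1 H1 i"
    and im2: "\<forall>i\<in>I2. col_in_image C2 src2 tgt2 R2 Z2 H2 i"
  shows "ic_Keq_log_solvable H1 Bd H2 C1 R1 Z1 src1 tgt1 kf1 kr1 C2 R2 Z2 src2 tgt2 kf2 kr2"
proof -
  let ?eq1 = "\<lambda>u v. Keq_log_eq C1 src1 tgt1 R1 Z1 kf1 kr1 H1 Bd u v"
  let ?eq2 = "\<lambda>u v. Keq_log_eq C2 src2 tgt2 R2 Z2 kf2 kr2 H2 Bd u v"
  have fin: "finite Bd"
    using wf(1) by (simp add: network_wf_def)
  obtain Y1 where Y1: "\<forall>i\<in>I1. \<forall>j\<in>R1. BtZt_col C1 src1 tgt1 Z1 i j = BtZt C1 src1 tgt1 H1 Z1 (Y1 i) j"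
    using im1 unfolding col_in_image_def by metis
  obtain Y2 where Y2: "\<forall>i\<in>I2. \<forall>j\<in>R2. BtZt_col C2 src2 tgt2 Z2 i j = BtZt C2 src2 tgt2 H2 Z2 (Y2 i) j"
    using im2 unfolding col_in_image_def by metis
  obtain x1 where x1: "\<forall>s\<in>H1 \<union> Bd. x1 s > 0" "?eq1 (\<lambda>s. ln (x1 s)) (\<lambda>s. ln (x1 s))"
    using bal(1) thermo_eq_iff_Keq_log_eq[OF wf(1) refl disj(1)] unfolding balanced_def by blast
  obtain x2 where x2: "\<forall>s\<in>Bd \<union> H2. x2 s > 0" "?eq2 (\<lambda>s. ln (x2 s)) (\<lambda>s. ln (x2 s))"
    using bal(2) thermo_eq_iff_Keq_log_eq[OF wf(2) Un_commute disj(2)] unfolding balanced_def by blast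
  define xb where "xb s = (if s \<in> I1 then x2 s else x1 s)" for s
  define xh1 where "xh1 s = exp (ln (x1 s) - (\<Sum>i\<in>I1. (ln (x2 i) - ln (x1 i)) * Y1 i s))" for s
  define xh2 where "xh2 s = exp (ln (x2 s) - (\<Sum>i\<in>I2. (ln (x1 i) - ln (x2 i)) * Y2 i s))" for s
  have "?eq1 (\<lambda>s. ln (xh1 s)) (\<lambda>s. ln (xb s))"
  proof -
    have "?eq1 (\<lambda>s. ln (x1 s) - (\<Sum>i\<in>I1. (ln (x2 i) - ln (x1 i)) * Y1 i s))
        (\<lambda>s. ln (x1 s) + (if s \<in> I1 then ln (x2 s) - ln (x1 s) else 0))"
      (is "Keq_log_eq _ _ _ _ _ _ _ _ _ ?u ?v")
      using part by (intro Keq_log_eq_shift_boundary[OF fin _ x1(2) Y1]) auto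
    moreover have "?eq1 ?u ?v \<longleftrightarrow> ?eq1 (\<lambda>s. ln (xh1 s)) (\<lambda>s. ln (xb s))"
      by (intro Keq_log_eq_cong) (auto simp: xh1_def xb_def)
    ultimately show ?thesis
      by simp
  qed
  moreover have "?eq2 (\<lambda>s. ln (xh2 s)) (\<lambda>s. ln (xb s))"
  proof -
    have "?eq2 (\<lambda>s. ln (x2 s) - (\<Sum>i\<in>I2. (ln (x1 i) - ln (x2 i)) * Y2 i s))
        (\<lambda>s. ln (x2 s) + (if s \<in> I2 then ln (x1 s) - ln (x2 s) else 0))"
      (is "Keq_log_eq _ _ _ _ _ _ _ _ _ ?u ?v")
      using part by (intro Keq_log_eq_shift_boundary[OF fin _ x2(2) Y2]) auto
    moreover have "?eq2 ?u ?v \<longleftrightarrow> ?eq2 (\<lambda>s. ln (xh2 s)) (\<lambda>s. ln (xb s))"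
      using part by (intro Keq_log_eq_cong) (auto simp: xh2_def xb_def)
    ultimately show ?thesis
      by simp
  qed
  moreover have "\<forall>s\<in>Bd. xb s > 0" "\<forall>s\<in>H1. xh1 s > 0" "\<forall>s\<in>H2. xh2 s > 0"
    using x1(1) x2(1) by (simp_all add: xb_def xh1_def xh2_def)
  ultimately show ?thesis
    unfolding ic_Keq_log_solvable_def by blast
qed

theorem proposition6:
  fixes H1 Bd H2 :: "'s set"
    and C1 :: "'c1 set" and R1 :: "'r1 set" and Z1 :: "'s \<Rightarrow> 'c1 \<Rightarrow> real"
    and src1 tgt1 :: "'r1 \<Rightarrow> 'c1" and kf1 kr1 :: "'r1 \<Rightarrow> real"
    and C2 :: "'c2 set" and R2 :: "'r2 set" and Z2 :: "'s \<Rightarrow> 'c2 \<Rightarrow> real"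
    and src2 tgt2 :: "'r2 \<Rightarrow> 'c2" and kf2 kr2 :: "'r2 \<Rightarrow> real"
  assumes disj: "H1 \<inter> Bd = {}" "H2 \<inter> Bd = {}" "H1 \<inter> H2 = {}"
    and wf1: "network_wf (H1 \<union> Bd) C1 R1 Z1 src1 tgt1"
    and wf2: "network_wf (Bd \<union> H2) C2 R2 Z2 src2 tgt2"
    and bal1: "balanced (H1 \<union> Bd) R1 Z1 src1 tgt1 kf1 kr1"
    and bal2: "balanced (Bd \<union> H2) R2 Z2 src2 tgt2 kf2 kr2"
  shows
    "(ic_balanced H1 Bd H2 R1 Z1 src1 tgt1 kf1 kr1 R2 Z2 src2 tgt2 kf2 kr2 \<longleftrightarrow>
       (\<exists>xh1 xh2 xb :: 's \<Rightarrow> real.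
          (\<forall>s\<in>H1. xh1 s > 0) \<and> (\<forall>s\<in>H2. xh2 s > 0) \<and> (\<forall>s\<in>Bd. xb s > 0) \<and>
          (\<forall>j\<in>R1. ln (Keq kf1 kr1 j) =
              BtZt C1 src1 tgt1 H1 Z1 (\<lambda>s. ln (xh1 s)) j
            + BtZt C1 src1 tgt1 Bd Z1 (\<lambda>s. ln (xb s)) j) \<and>
          (\<forall>j\<in>R2. ln (Keq kf2 kr2 j) =
              BtZt C2 src2 tgt2 H2 Z2 (\<lambda>s. ln (xh2 s)) j
            + BtZt C2 src2 tgt2 Bd Z2 (\<lambda>s. ln (xb s)) j)))
     \<and>
     (\<forall>I1 I2. I1 \<union> I2 = Bd \<and> I1 \<inter> I2 = {} \<and>
        (\<forall>i\<in>I1. \<exists>y :: 's \<Rightarrow> real. \<forall>j\<in>R1.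
            BtZt_col C1 src1 tgt1 Z1 i j = BtZt C1 src1 tgt1 H1 Z1 y j) \<and>
        (\<forall>i\<in>I2. \<exists>y :: 's \<Rightarrow> real. \<forall>j\<in>R2.
            BtZt_col C2 src2 tgt2 Z2 i j = BtZt C2 src2 tgt2 H2 Z2 y j)
      \<longrightarrow> ic_balanced H1 Bd H2 R1 Z1 src1 tgt1 kf1 kr1 R2 Z2 src2 tgt2 kf2 kr2)"
proof -
  have solvable: "ic_balanced H1 Bd H2 R1 Z1 src1 tgt1 kf1 kr1 R2 Z2 src2 tgt2 kf2 kr2 \<longleftrightarrow>
      ic_Keq_log_solvable H1 Bd H2 C1 R1 Z1 src1 tgt1 kf1 kr1 C2 R2 Z2 src2 tgt2 kf2 kr2"
    by (rule ic_balanced_iff_Keq_log_solvable[OF wf1 wf2 disj bal1 bal2])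
  have "ic_balanced H1 Bd H2 R1 Z1 src1 tgt1 kf1 kr1 R2 Z2 src2 tgt2 kf2 kr2"
    if "I1 \<union> I2 = Bd" "I1 \<inter> I2 = {}"
      "\<forall>i\<in>I1. col_in_image C1 src1 tgt1 R1 Z1 H1 i" "\<forall>i\<in>I2. col_in_image C2 src2 tgt2 R2 Z2 H2 i"
    for I1 I2
    using solvable ic_Keq_log_solvable_if_partition[OF wf1 wf2 disj(1,2) bal1 bal2 that] by simp
  with solvable show ?thesis
    unfolding ic_Keq_log_solvable_def Keq_log_eq_def col_in_image_def by blast
qed

end
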